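(* Let $2\le q<p<\infty$ and let $\mathcal{M}\subset\ell_p$ be an $n$-point metric space (with the $\ell_p$ metric). Suppose that for every $\Delta'>0$ there exists a $(\beta,\Delta')$-Lipschitz decomposition of $\mathcal{M}$. Then for every $\Delta>0$ there exists a $(\beta_{new},\Delta)$-Lipschitz decomposition of $\mathcal{M}$, where \[ \beta_{new} = 4\Big(\frac{p}{2q}\Big)^{q/p}\,[\beta^*_n(\ell_q)]^{q/p}\,\beta^{1-q/p}. \]
   Context: Let $(\mathcal{M},d_\mathcal{M})$ be a metric space. A distribution $\mathcal{D}$ over partitions of $\mathcal{M}$ is a $(\beta,\Delta)$-Lipschitz decomposition if (i) every cluster $C$ of every partition in the support of $\mathcal{D}$ has diameter at most $\Delta$; and (ii) for every $x,y\in\mathcal{M}$, $\Pr_{P\sim\mathcal{D}}[P(x)\ne P(y)]\le \beta\, d_\mathcal{M}(x,y)/\Delta$, where $P(z)$ is the cluster containing $z$. The decomposition parameter of $\mathcal{M}$ is $\beta^*(\mathcal{M}) = \inf\{\beta\ge 1 : \text{for all } \Delta>0, \text{every finite } \mathcal{M}'\subseteq\mathcal{M} \text{ admits a } (\beta,\Delta)\text{-Lipschitz decomposition}\}$, and $\beta^*_n(\mathcal{M}) = \sup\{\beta^*(\mathcal{M}') : \mathcal{M}'\subseteq\mathcal{M}, |\mathcal{M}'|\le n\}$. *)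

theory Defs
  imports "HOL-Probability.Probability" "HOL-Library.Disjoint_Sets"
begin

definition lp_space :: "real \<Rightarrow> (nat \<Rightarrow> real) set" where
  "lp_space p = {x. summable (\<lambda>i. \<bar>x i\<bar> powr p)}"

definition lp_dist :: "real \<Rightarrow> (nat \<Rightarrow> real) \<Rightarrow> (nat \<Rightarrow> real) \<Rightarrow> real" where
  "lp_dist p x y = (\<Sum>i. \<bar>x i - y i\<bar> powr p) powr (1 / p)"

text \<open>A (beta, Delta)-Lipschitz decomposition of the finite metric space (M, d):
  a probability distribution over partitions of M (since M is finite there are only
  finitely many partitions, so a pmf is fully general).\<close>

definition lipschitz_decomp ::
  "('a \<Rightarrow> 'a \<Rightarrow> real) \<Rightarrow> 'a set \<Rightarrow> real \<Rightarrow> real \<Rightarrow> 'a set set pmf \<Rightarrow> bool" where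
  "lipschitz_decomp d M \<beta> \<Delta> D \<longleftrightarrow>
     (\<forall>P\<in>set_pmf D. partition_on M P \<and> (\<forall>C\<in>P. \<forall>x\<in>C. \<forall>y\<in>C. d x y \<le> \<Delta>)) \<and>
     (\<forall>x\<in>M. \<forall>y\<in>M. measure_pmf.prob D {P. \<not> (\<exists>C\<in>P. x \<in> C \<and> y \<in> C)} \<le> \<beta> * d x y / \<Delta>)"

definition beta_star :: "('a \<Rightarrow> 'a \<Rightarrow> real) \<Rightarrow> 'a set \<Rightarrow> real" where
  "beta_star d M = Inf {\<beta>. \<beta> \<ge> 1 \<and> (\<forall>\<Delta>>0. \<forall>M'. M' \<subseteq> M \<and> finite M' \<longrightarrow>
        (\<exists>D. lipschitz_decomp d M' \<beta> \<Delta> D))}"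

definition beta_star_n :: "nat \<Rightarrow> ('a \<Rightarrow> 'a \<Rightarrow> real) \<Rightarrow> 'a set \<Rightarrow> real" where
  "beta_star_n n d M = Sup {beta_star d M' | M'. M' \<subseteq> M \<and> finite M' \<and> card M' \<le> n}"

end

theory Submission
  imports Defs "HOL-Library.Function_Algebras"
begin

text \<open>Refine a (\<beta>, t \<Delta>)-decomposition of M cluster by cluster. Centred at its centroid,
  a cluster lies in a ball of radius t \<Delta>, and the Mazur map x \<mapsto> sgn x |x|^(p/q) sends it into l_q
  with ||M x - M y||_q \<ge> 2^(1 - p/q) ||x - y||_p^(p/q) and with Lipschitz constant
  (p/q) (t \<Delta>)^(p/q - 1). Pulling back a decomposition of the image at scale 2^(1 - p/q) \<Delta>^(p/q)
  with parameter close to beta_star_n(l_q) splits the cluster into pieces of diameter \<Delta>. Refining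
  all clusters independently, the separation probabilities of the two levels add up to
  (\<beta> / t + (p/q) 2^(p/q - 1) beta_star_n t^(p/q - 1)) ||x - y||_p / \<Delta>, and balancing the two
  terms by the choice of t gives the stated parameter.\<close>

lemma le_two_powr_minus_one:
  fixes s :: real
  assumes "0 \<le> s" "s \<le> 1"
  shows "s \<le> 2 powr (s - 1)"
proof -
  have "1 + (s - 1) * ln 2 \<le> 2 powr (s - 1)"
    using exp_ge_add_one_self[of "(s - 1) * ln 2"] by (simp add: powr_def)
  moreover have "s \<le> 1 + (s - 1) * ln 2"
    using mult_nonneg_nonneg[of "1 - s" "1 - ln 2"] assms ln_2_less_1 by (simp add: algebra_simps)
  ultimately show ?thesis by linarith
qed

lemma powr_mult_self: "0 \<le> a \<Longrightarrow> a * a powr (r - 1) = a powr r"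
  for a r :: real
  using powr_mult_base[of a "r - 1"] by simp

lemma abs_add_powr_le:
  fixes a b p :: real
  assumes "p > 0"
  shows "\<bar>a + b\<bar> powr p \<le> 2 powr p * (\<bar>a\<bar> powr p + \<bar>b\<bar> powr p)"
proof -
  have "\<bar>a + b\<bar> powr p \<le> (2 * max \<bar>a\<bar> \<bar>b\<bar>) powr p"
    using assms by (intro powr_mono2) auto
  also have "\<dots> = 2 powr p * max \<bar>a\<bar> \<bar>b\<bar> powr p" by (simp add: powr_mult)
  also have "max \<bar>a\<bar> \<bar>b\<bar> powr p \<le> \<bar>a\<bar> powr p + \<bar>b\<bar> powr p"
    by (simp add: max_def)
  finally show ?thesis by simp
qed

lemma powr_add_le_powr_sum:
  fixes a b r :: real
  assumes "1 \<le> r" "0 \<le> a" "0 \<le> b"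
  shows "a powr r + b powr r \<le> (a + b) powr r"
proof -
  have "a * a powr (r - 1) \<le> a * (a + b) powr (r - 1)"
    "b * b powr (r - 1) \<le> b * (a + b) powr (r - 1)"
    using assms by (auto intro!: mult_left_mono powr_mono2)
  then show ?thesis
    using assms powr_mult_self[of a r] powr_mult_self[of b r] powr_mult_self[of "a + b" r]
    by (simp add: algebra_simps)
qed

lemma midpoint_powr_le_of_ge_one:
  fixes x y e :: real
  assumes e: "1 \<le> e" and xy: "0 \<le> x" "0 \<le> y"
  shows "((x + y) / 2) powr e \<le> (x powr e + y powr e) / 2"
proof (cases "x = 0 \<or> y = 0")
  case True
  have "2 \<le> 2 powr e" using powr_mono[OF e, of 2] by simp
  have "(z / 2) powr e \<le> z powr e / 2" if "0 \<le> z" for z :: real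
  proof -
    have "(z / 2) powr e = z powr e / 2 powr e" using that by (simp add: powr_divide)
    also have "\<dots> \<le> z powr e / 2" using \<open>2 \<le> 2 powr e\<close> by (intro divide_left_mono) auto
    finally show ?thesis .
  qed
  then show ?thesis using True xy e by auto
next
  case False
  then have "x > 0" "y > 0" using xy by auto
  with convex_onD[OF powr_convex[OF e], of "1 / 2" x y] show ?thesis
    by (simp add: field_simps)
qed

lemma midpoint_powr_le_of_nonpos:
  fixes x y e :: real
  assumes e: "e \<le> 0" and xy: "0 < x" "0 < y"
  shows "((x + y) / 2) powr e \<le> (x powr e + y powr e) / 2"
proof -
  have "((x + y) / 2) powr e \<le> sqrt (x * y) powr e"
    using xy by (intro powr_mono2'[OF e] arith_geo_mean_sqrt) auto
  also have "sqrt (x * y) powr e = sqrt (x powr e * y powr e)"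
    using xy by (simp add: powr_half_sqrt[symmetric] powr_powr powr_mult mult.commute)
  also have "\<dots> \<le> (x powr e + y powr e) / 2" by (intro arith_geo_mean_sqrt) auto
  finally show ?thesis .
qed

text \<open>For concave t^s the secant slope over [v, u] is the mean of the convex derivative
  s t^(s - 1), hence at least its value at the midpoint (Hermite-Hadamard).\<close>

lemma powr_secant_ge_midpoint_derivative_pos:
  fixes s u v :: real
  assumes s: "0 < s" "s \<le> 1" and uv: "0 < v" "v < u"
  shows "s * (u - v) * ((u + v) / 2) powr (s - 1) \<le> u powr s - v powr s"
proof -
  define m where "m = (u + v) / 2"
  define w0 where "w0 = (u - v) / 2"
  have mw: "0 < w0" "w0 < m" using uv by (auto simp: m_def w0_def)
  define k where "k w = (m + w) powr s - (m - w) powr s - 2 * w * s * m powr (s - 1)" for w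
  define k' where "k' w = s * (m + w) powr (s - 1) + s * (m - w) powr (s - 1) - 2 * s * m powr (s - 1)"
    for w
  have "(k has_real_derivative k' w) (at w)" if "w \<in> {0..w0}" for w
  proof -
    have "m + w > 0" "m - w > 0" using mw that by auto
    then show ?thesis
      unfolding k_def k'_def by (auto intro!: derivative_eq_intros simp: algebra_simps)
  qed
  moreover have "0 \<le> k' w" if "w \<in> {0..w0}" for w
  proof -
    have "m powr (s - 1) \<le> ((m + w) powr (s - 1) + (m - w) powr (s - 1)) / 2"
      using midpoint_powr_le_of_nonpos[of "s - 1" "m + w" "m - w"] mw that s by simp
    from mult_left_mono[OF this, of s] s show ?thesis
      by (simp add: k'_def algebra_simps)
  qed
  ultimately have "k 0 \<le> k w0"
    by (intro deriv_nonneg_imp_mono[of 0 w0 k k']) (use mw in auto)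
  have "m + w0 = u" "m - w0 = v" "2 * w0 = u - v"
    by (simp_all add: m_def w0_def field_simps)
  then have "k w0 = u powr s - v powr s - (u - v) * s * m powr (s - 1)"
    unfolding k_def by (simp only:)
  with \<open>k 0 \<le> k w0\<close> show ?thesis by (simp add: k_def m_def algebra_simps)
qed

lemma powr_secant_ge_midpoint_derivative:
  fixes s u v :: real
  assumes s: "0 < s" "s \<le> 1" and uv: "0 \<le> v" "v \<le> u"
  shows "s * (u - v) * ((u + v) / 2) powr (s - 1) \<le> u powr s - v powr s"
proof -
  consider "v = u" | "v = 0" "0 < u" | "0 < v" "v < u" using uv by linarith
  then show ?thesis
  proof cases
    case 2
    have "s * (u - v) * ((u + v) / 2) powr (s - 1) = (s / 2 powr (s - 1)) * (u * u powr (s - 1))"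
      using 2 by (simp add: powr_divide)
    also have "\<dots> = (s / 2 powr (s - 1)) * u powr s"
      using 2 by (simp add: powr_mult_self)
    also have "\<dots> \<le> 1 * u powr s"
      using le_two_powr_minus_one[of s] s by (intro mult_right_mono) auto
    finally show ?thesis using 2 by simp
  qed (use powr_secant_ge_midpoint_derivative_pos[OF s] in auto)
qed

lemma powr_diff_le_power_mean:
  fixes a b r :: real
  assumes r: "1 \<le> r" and ab: "0 \<le> b" "b \<le> a"
  shows "a powr r - b powr r \<le> r * (a - b) * ((a powr r + b powr r) / 2) powr ((r - 1) / r)"
proof -
  define m where "m = (a powr r + b powr r) / 2"
  have ua: "(a powr r) powr (1 / r) = a" and vb: "(b powr r) powr (1 / r) = b"
    using r ab by (simp_all add: powr_powr)
  have secant: "(1 / r) * (a powr r - b powr r) * m powr (1 / r - 1) \<le> a - b"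
    using powr_secant_ge_midpoint_derivative[of "1 / r" "b powr r" "a powr r"] r ab
    by (simp add: ua vb m_def powr_mono2)
  show ?thesis
  proof (cases "m = 0")
    case True
    then have "a = 0" "b = 0" using ab r by (auto simp: m_def add_nonneg_eq_0_iff)
    then show ?thesis by simp
  next
    case False
    then have m: "m > 0" by (simp add: m_def order_less_le add_nonneg_nonneg)
    have "m powr (1 / r - 1) * m powr ((r - 1) / r) = m powr 0"
      using r by (simp add: powr_add[symmetric] field_simps)
    then have cancel: "r * m powr ((r - 1) / r) * ((1 / r) * m powr (1 / r - 1)) = 1"
      using r m by (simp add: mult.commute)
    have "a powr r - b powr r
        = (r * m powr ((r - 1) / r) * ((1 / r) * m powr (1 / r - 1))) * (a powr r - b powr r)"
      by (simp only: cancel mult_1_left)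
    also have "\<dots> = r * m powr ((r - 1) / r) * ((1 / r) * (a powr r - b powr r) * m powr (1 / r - 1))"
      by (simp only: mult.assoc mult.left_commute mult.commute)
    also have "\<dots> \<le> r * m powr ((r - 1) / r) * (a - b)"
      using secant r by (intro mult_left_mono) auto
    finally show ?thesis by (simp add: m_def algebra_simps)
  qed
qed

lemma powr_add_le_power_mean:
  fixes a c r :: real
  assumes r: "1 \<le> r" and ac: "0 \<le> a" "0 \<le> c"
  shows "a powr r + c powr r \<le> r * (a + c) * ((a powr r + c powr r) / 2) powr ((r - 1) / r)"
proof -
  define m where "m = (a powr r + c powr r) / 2"
  show ?thesis
  proof (cases "m = 0")
    case True
    then show ?thesis using ac by (simp add: m_def)
  next
    case False
    then have m: "m > 0" by (simp add: m_def order_less_le add_nonneg_nonneg)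
    have "m powr (1 / r) \<le> ((a + c) powr r / 2) powr (1 / r)"
      using powr_add_le_powr_sum[OF r ac] m r by (intro powr_mono2) (auto simp: m_def)
    also have "\<dots> = (a + c) / 2 powr (1 / r)"
      using ac r by (simp add: powr_divide powr_powr)
    finally have m_root: "m powr (1 / r) \<le> (a + c) / 2 powr (1 / r)" .
    have "1 / r \<le> 2 powr (1 / r) / 2"
      using le_two_powr_minus_one[of "1 / r"] r by (simp add: powr_diff)
    then have "2 / 2 powr (1 / r) \<le> r" using r by (simp add: field_simps)
    have "a powr r + c powr r = 2 * m powr (1 / r) * m powr ((r - 1) / r)"
      using m r by (simp add: m_def powr_add[symmetric] field_simps)
    also have "\<dots> \<le> 2 * ((a + c) / 2 powr (1 / r)) * m powr ((r - 1) / r)"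
      using m_root by (intro mult_right_mono mult_left_mono) auto
    also have "\<dots> = (2 / 2 powr (1 / r)) * (a + c) * m powr ((r - 1) / r)" by simp
    also have "\<dots> \<le> r * (a + c) * m powr ((r - 1) / r)"
      using \<open>2 / 2 powr (1 / r) \<le> r\<close> ac by (intro mult_right_mono) auto
    finally show ?thesis by (simp add: m_def)
  qed
qed

lemma Holder_inequality_suminf:
  fixes u v :: "nat \<Rightarrow> real"
  assumes st: "s > 1" "t > 1" "1 / s + 1 / t = 1"
    and nonneg: "\<And>i. 0 \<le> u i" "\<And>i. 0 \<le> v i"
    and su: "summable (\<lambda>i. u i powr s)" and sv: "summable (\<lambda>i. v i powr t)"
  shows "summable (\<lambda>i. u i * v i)"
    and "(\<Sum>i. u i * v i) \<le> (\<Sum>i. u i powr s) powr (1 / s) * (\<Sum>i. v i powr t) powr (1 / t)"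
proof -
  show summable: "summable (\<lambda>i. u i * v i)"
  proof (rule summable_comparison_test)
    show "\<exists>N. \<forall>i\<ge>N. norm (u i * v i) \<le> u i powr s / s + v i powr t / t"
      using Youngs_inequality[OF st] nonneg by auto
    show "summable (\<lambda>i. u i powr s / s + v i powr t / t)"
      using su sv by (intro summable_add summable_divide)
  qed
  define A where "A = (\<Sum>i. u i powr s) powr (1 / s)"
  define B where "B = (\<Sum>i. v i powr t) powr (1 / t)"
  show "(\<Sum>i. u i * v i) \<le> A * B"
  proof (cases "A = 0 \<or> B = 0")
    case True
    then have "(\<lambda>i. u i * v i) = (\<lambda>_. 0)"
      using su sv st by (auto simp: A_def B_def suminf_eq_zero_iff)
    then show ?thesis by (simp add: A_def B_def)
  next
    case False
    then have AB: "A > 0" "B > 0" by (auto simp: A_def B_def)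
    have sum_A: "(\<Sum>i. (u i / A) powr s) = 1" and sum_B: "(\<Sum>i. (v i / B) powr t) = 1"
      using AB nonneg st su sv
      by (auto simp: powr_divide suminf_divide A_def B_def powr_powr suminf_nonneg)
    have young: "u i / A * (v i / B) \<le> (u i / A) powr s / s + (v i / B) powr t / t" for i
      using Youngs_inequality[OF st, of "u i / A" "v i / B"] nonneg AB by simp
    have sAB: "summable (\<lambda>i. (u i / A) powr s / s + (v i / B) powr t / t)"
      using su sv AB nonneg by (intro summable_add summable_divide) (simp_all add: powr_divide)
    have "(\<Sum>i. u i * v i) / (A * B) = (\<Sum>i. u i / A * (v i / B))"
      using summable by (simp add: suminf_divide)
    also have "\<dots> \<le> (\<Sum>i. (u i / A) powr s / s + (v i / B) powr t / t)"
      using young summable sAB by (intro suminf_le) (simp_all add: summable_divide)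
    also have "\<dots> = 1 / s + 1 / t"
      using sAB su sv AB nonneg sum_A sum_B
      by (subst suminf_add[symmetric]) (auto simp: suminf_divide powr_divide intro: summable_divide)
    finally show ?thesis using AB st by (simp add: field_simps)
  qed
qed

section \<open>The spaces l_p\<close>

definition lp_norm :: "real \<Rightarrow> (nat \<Rightarrow> real) \<Rightarrow> real" where
  "lp_norm p x = (\<Sum>i. \<bar>x i\<bar> powr p) powr (1 / p)"

lemma lp_dist_eq_lp_norm: "lp_dist p x y = lp_norm p (x - y)"
  by (simp add: lp_dist_def lp_norm_def)

lemma lp_norm_nonneg [simp]: "0 \<le> lp_norm p x"
  by (simp add: lp_norm_def)

lemma lp_space_iff: "x \<in> lp_space p \<longleftrightarrow> summable (\<lambda>i. \<bar>x i\<bar> powr p)"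
  by (simp add: lp_space_def)

lemma lp_norm_powr:
  assumes "p > 0" "x \<in> lp_space p"
  shows "lp_norm p x powr p = (\<Sum>i. \<bar>x i\<bar> powr p)"
  using assms by (simp add: lp_norm_def powr_powr suminf_nonneg lp_space_iff)

lemma lp_norm_pos:
  assumes "p > 0" "x \<in> lp_space p" "x \<noteq> 0"
  shows "lp_norm p x > 0"
proof -
  obtain i where "x i \<noteq> 0" using assms(3) by (auto simp: fun_eq_iff)
  then have "\<bar>x i\<bar> powr p \<noteq> 0" by simp
  then have "(\<Sum>i. \<bar>x i\<bar> powr p) \<noteq> 0"
    using assms(2) by (auto simp: lp_space_iff suminf_eq_zero_iff)
  moreover have "(\<Sum>i. \<bar>x i\<bar> powr p) \<ge> 0"
    using assms(2) by (simp add: lp_space_iff suminf_nonneg)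
  ultimately show ?thesis by (simp add: lp_norm_def)
qed

lemma lp_space_add:
  assumes "p > 0" "x \<in> lp_space p" "y \<in> lp_space p"
  shows "x + y \<in> lp_space p"
proof -
  have "summable (\<lambda>i. 2 powr p * (\<bar>x i\<bar> powr p + \<bar>y i\<bar> powr p))"
    using assms by (intro summable_mult summable_add) (auto simp: lp_space_iff)
  then show ?thesis
    unfolding lp_space_iff
    by (rule summable_comparison_test[rotated]) (use abs_add_powr_le[OF assms(1)] in auto)
qed

lemma lp_space_cmult:
  assumes "x \<in> lp_space p"
  shows "(\<lambda>i. c * x i) \<in> lp_space p"
proof -
  have "summable (\<lambda>i. \<bar>c\<bar> powr p * \<bar>x i\<bar> powr p)"
    using assms by (intro summable_mult) (auto simp: lp_space_iff)
  then show ?thesis by (simp add: lp_space_iff abs_mult powr_mult)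
qed

lemma lp_space_diff:
  assumes "p > 0" "x \<in> lp_space p" "y \<in> lp_space p"
  shows "x - y \<in> lp_space p"
proof -
  have "x - y = x + (\<lambda>i. (-1) * y i)" by (simp add: fun_eq_iff)
  then show ?thesis
    by (simp only: lp_space_add[OF assms(1,2) lp_space_cmult[OF assms(3)]])
qed

lemma lp_norm_cmult:
  assumes "p > 0" "x \<in> lp_space p"
  shows "lp_norm p (\<lambda>i. c * x i) = \<bar>c\<bar> * lp_norm p x"
proof -
  have "(\<Sum>i. \<bar>c * x i\<bar> powr p) = \<bar>c\<bar> powr p * (\<Sum>i. \<bar>x i\<bar> powr p)"
    using assms by (simp add: abs_mult powr_mult suminf_mult lp_space_iff)
  then have "lp_norm p (\<lambda>i. c * x i) = (\<bar>c\<bar> powr p) powr (1 / p) * lp_norm p x"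
    using assms by (simp add: lp_norm_def powr_mult suminf_nonneg lp_space_iff)
  also have "(\<bar>c\<bar> powr p) powr (1 / p) = \<bar>c\<bar>"
    using assms by (simp add: powr_powr)
  finally show ?thesis .
qed

lemma Holder_inequality_lp_norm:
  assumes p: "p > 1" and w: "w \<in> lp_space p" and z: "z \<in> lp_space p"
  shows "summable (\<lambda>i. \<bar>w i\<bar> * \<bar>z i\<bar> powr (p - 1))"
    and "(\<Sum>i. \<bar>w i\<bar> * \<bar>z i\<bar> powr (p - 1)) \<le> lp_norm p w * lp_norm p z powr (p - 1)"
proof -
  define t where "t = p / (p - 1)"
  have st: "p > 1" "t > 1" "1 / p + 1 / t = 1" using p by (auto simp: t_def field_simps)
  have zt: "(\<bar>z i\<bar> powr (p - 1)) powr t = \<bar>z i\<bar> powr p" for i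
    using p by (simp add: t_def powr_powr)
  have "summable (\<lambda>i. \<bar>w i\<bar> * \<bar>z i\<bar> powr (p - 1))"
    "(\<Sum>i. \<bar>w i\<bar> * \<bar>z i\<bar> powr (p - 1))
      \<le> (\<Sum>i. \<bar>w i\<bar> powr p) powr (1 / p) * (\<Sum>i. \<bar>z i\<bar> powr p) powr (1 / t)"
    using Holder_inequality_suminf[OF st, of "\<lambda>i. \<bar>w i\<bar>" "\<lambda>i. \<bar>z i\<bar> powr (p - 1)"] w z
    by (simp_all add: zt lp_space_iff)
  moreover have "(\<Sum>i. \<bar>z i\<bar> powr p) powr (1 / t) = lp_norm p z powr (p - 1)"
    using p by (simp add: lp_norm_def powr_powr t_def)
  ultimately show "summable (\<lambda>i. \<bar>w i\<bar> * \<bar>z i\<bar> powr (p - 1))"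
    "(\<Sum>i. \<bar>w i\<bar> * \<bar>z i\<bar> powr (p - 1)) \<le> lp_norm p w * lp_norm p z powr (p - 1)"
    by (simp_all add: lp_norm_def[of p w])
qed

lemma lp_norm_add_le:
  assumes p: "p > 1" and x: "x \<in> lp_space p" and y: "y \<in> lp_space p"
  shows "lp_norm p (x + y) \<le> lp_norm p x + lp_norm p y"
proof -
  define z where "z = x + y"
  define N where "N = lp_norm p z"
  have z: "z \<in> lp_space p" using lp_space_add[OF _ x y] p by (simp add: z_def)
  note Hx = Holder_inequality_lp_norm[OF p x z] and Hy = Holder_inequality_lp_norm[OF p y z]
  have "\<bar>z i\<bar> powr p \<le> \<bar>x i\<bar> * \<bar>z i\<bar> powr (p - 1) + \<bar>y i\<bar> * \<bar>z i\<bar> powr (p - 1)" for i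
  proof -
    have "\<bar>z i\<bar> powr p = \<bar>z i\<bar> * \<bar>z i\<bar> powr (p - 1)" by (simp add: powr_mult_self)
    also have "\<dots> \<le> (\<bar>x i\<bar> + \<bar>y i\<bar>) * \<bar>z i\<bar> powr (p - 1)"
      by (intro mult_right_mono) (auto simp: z_def)
    finally show ?thesis by (simp add: algebra_simps)
  qed
  then have "N powr p \<le> (\<Sum>i. \<bar>x i\<bar> * \<bar>z i\<bar> powr (p - 1)) + (\<Sum>i. \<bar>y i\<bar> * \<bar>z i\<bar> powr (p - 1))"
    using lp_norm_powr[OF _ z] z Hx(1) Hy(1) p
    by (subst suminf_add) (auto simp: N_def lp_space_iff intro!: suminf_le summable_add)
  also have "\<dots> \<le> (lp_norm p x + lp_norm p y) * N powr (p - 1)"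
    using Hx(2) Hy(2) by (simp add: N_def algebra_simps)
  finally have "N * N powr (p - 1) \<le> (lp_norm p x + lp_norm p y) * N powr (p - 1)"
    by (simp add: N_def powr_mult_self)
  then show ?thesis
    by (cases "N = 0") (auto simp: N_def z_def add_nonneg_nonneg mult_le_cancel_right)
qed

lemma lp_space_sum_lp_norm_le:
  assumes p: "p > 1" and "finite A" and "\<And>a. a \<in> A \<Longrightarrow> f a \<in> lp_space p"
  shows "(\<lambda>i. \<Sum>a\<in>A. f a i) \<in> lp_space p \<and>
    lp_norm p (\<lambda>i. \<Sum>a\<in>A. f a i) \<le> (\<Sum>a\<in>A. lp_norm p (f a))"
  using assms(2,3)
proof (induction A rule: finite_induct)
  case empty
  then show ?case by (simp add: lp_space_iff lp_norm_def)
next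
  case (insert a A)
  have fa: "f a \<in> lp_space p"
    and IH: "(\<lambda>i. \<Sum>a\<in>A. f a i) \<in> lp_space p"
      "lp_norm p (\<lambda>i. \<Sum>a\<in>A. f a i) \<le> (\<Sum>a\<in>A. lp_norm p (f a))"
    using insert by auto
  have "(\<lambda>i. \<Sum>a\<in>insert a A. f a i) = f a + (\<lambda>i. \<Sum>a\<in>A. f a i)"
    using insert.hyps by (simp add: fun_eq_iff)
  moreover have "lp_norm p (f a + (\<lambda>i. \<Sum>a\<in>A. f a i)) \<le> lp_norm p (f a) + lp_norm p (\<lambda>i. \<Sum>a\<in>A. f a i)"
    by (rule lp_norm_add_le[OF p fa IH(1)])
  ultimately show ?case
    using lp_space_add[OF _ fa IH(1)] IH(2) p insert.hyps by simp
qed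

lemma lp_dist_commute: "lp_dist p x y = lp_dist p y x"
  by (simp add: lp_dist_def abs_minus_commute)

lemma lp_dist_self [simp]: "lp_dist p x x = 0"
  by (simp add: lp_dist_def)

lemma lp_dist_nonneg [simp]: "0 \<le> lp_dist p x y"
  by (simp add: lp_dist_def)

lemma Metric_space_lp:
  assumes "p > 1"
  shows "Metric_space (lp_space p) (lp_dist p)"
proof
  fix x y z
  assume xyz: "x \<in> lp_space p" "y \<in> lp_space p" "z \<in> lp_space p"
  have "lp_dist p x y > 0" if "x \<noteq> y"
    using lp_norm_pos[OF _ lp_space_diff[OF _ xyz(1,2)]] assms that
    by (simp add: lp_dist_eq_lp_norm)
  then show "lp_dist p x y = 0 \<longleftrightarrow> x = y" by force
  have "lp_norm p ((x - y) + (y - z)) \<le> lp_norm p (x - y) + lp_norm p (y - z)"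
    using assms xyz by (intro lp_norm_add_le lp_space_diff) auto
  moreover have "(x - y) + (y - z) = x - z" by (simp add: fun_eq_iff)
  ultimately show "lp_dist p x z \<le> lp_dist p x y + lp_dist p y z"
    by (simp add: lp_dist_eq_lp_norm)
qed (simp_all add: lp_dist_commute)

definition centroid :: "(nat \<Rightarrow> real) set \<Rightarrow> nat \<Rightarrow> real" where
  "centroid C = (\<lambda>i. (\<Sum>y\<in>C. y i) / real (card C))"

lemma centroid_in_lp_space:
  assumes "p > 1" "finite C" "C \<subseteq> lp_space p"
  shows "centroid C \<in> lp_space p"
  using lp_space_cmult[OF conjunct1[OF lp_space_sum_lp_norm_le[OF assms(1,2), of "\<lambda>y. y"]],
      of "1 / real (card C)"] assms(3)
  by (auto simp: centroid_def)

lemma lp_dist_centroid_le: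
  assumes p: "p > 1" and C: "finite C" "C \<subseteq> lp_space p" and x: "x \<in> C"
    and diam: "\<And>y. y \<in> C \<Longrightarrow> lp_dist p x y \<le> D"
  shows "lp_dist p x (centroid C) \<le> (1 - 1 / real (card C)) * D"
proof -
  define m where "m = real (card C)"
  have "card C > 0" using C x by (auto simp: card_gt_0_iff)
  then have m: "m \<ge> 1" by (simp add: m_def)
  have xy: "x - y \<in> lp_space p" if "y \<in> C" for y
    using lp_space_diff[of p x y] p C x that by auto
  have sum: "(\<lambda>i. \<Sum>y\<in>C. (x - y) i) \<in> lp_space p"
    "lp_norm p (\<lambda>i. \<Sum>y\<in>C. (x - y) i) \<le> (\<Sum>y\<in>C. lp_dist p x y)"
    using lp_space_sum_lp_norm_le[OF p C(1), of "\<lambda>y. x - y"] xy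
    by (auto simp: lp_dist_eq_lp_norm)
  have "x - centroid C = (\<lambda>i. (1 / m) * (\<Sum>y\<in>C. (x - y) i))"
    using m by (simp add: fun_eq_iff centroid_def m_def sum_subtractf field_simps)
  then have "lp_dist p x (centroid C) = lp_norm p (\<lambda>i. (1 / m) * (\<Sum>y\<in>C. (x - y) i))"
    by (simp only: lp_dist_eq_lp_norm)
  also have "\<dots> = (1 / m) * lp_norm p (\<lambda>i. \<Sum>y\<in>C. (x - y) i)"
    using lp_norm_cmult[OF _ sum(1), of "1 / m"] p m by simp
  also have "\<dots> \<le> (1 / m) * (\<Sum>y\<in>C. lp_dist p x y)"
    using sum(2) m by (intro mult_left_mono) auto
  also have "(\<Sum>y\<in>C. lp_dist p x y) = (\<Sum>y\<in>C - {x}. lp_dist p x y)"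
    using C x by (simp add: sum.remove)
  also have "\<dots> \<le> (m - 1) * D"
    using sum_mono[of "C - {x}" "lp_dist p x" "\<lambda>_. D"] diam C x \<open>card C > 0\<close>
    by (simp add: m_def of_nat_diff)
  finally show ?thesis using m by (simp add: m_def field_simps)
qed

section \<open>The Mazur map\<close>

definition mazur :: "real \<Rightarrow> real \<Rightarrow> real" where
  "mazur r t = sgn t * \<bar>t\<bar> powr r"

lemma mazur_nonneg: "0 \<le> t \<Longrightarrow> mazur r t = t powr r"
  by (cases "t = 0") (auto simp: mazur_def)

lemma mazur_minus: "mazur r (- t) = - mazur r t"
  by (simp add: mazur_def)

lemma abs_mazur: "\<bar>mazur r t\<bar> = \<bar>t\<bar> powr r"
  by (cases "t = 0") (auto simp: mazur_def abs_mult)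

lemma real_pair_sign_cases [case_names same_sign opposite_sign swap minus]:
  fixes P :: "real \<Rightarrow> real \<Rightarrow> bool"
  assumes same_sign: "\<And>a b. 0 \<le> b \<Longrightarrow> b \<le> a \<Longrightarrow> P a b"
    and opposite_sign: "\<And>a b. b \<le> 0 \<Longrightarrow> 0 \<le> a \<Longrightarrow> P a b"
    and swap: "\<And>a b. P a b \<Longrightarrow> P b a"
    and minus: "\<And>a b. P a b \<Longrightarrow> P (- a) (- b)"
  shows "P a b"
proof -
  have "P a b" if "b \<le> a" for a b
  proof -
    consider "0 \<le> b" | "a \<le> 0" | "b \<le> 0" "0 \<le> a" by linarith
    then show ?thesis
    proof cases
      case 2
      then have "P (- b) (- a)" using same_sign that by simp
      then show ?thesis using minus[OF swap] by fastforce
    qed (use same_sign opposite_sign that in auto)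
  qed
  then show ?thesis using swap by (cases "b \<le> a") auto
qed

lemma abs_mazur_diff_ge:
  assumes r: "1 \<le> r"
  shows "2 powr (1 - r) * \<bar>a - b\<bar> powr r \<le> \<bar>mazur r a - mazur r b\<bar>"
proof (induction a b rule: real_pair_sign_cases)
  case (same_sign a b)
  have "2 powr (1 - r) * (a - b) powr r \<le> 1 * (a - b) powr r"
    using powr_mono[of "1 - r" 0 2] r by (intro mult_right_mono) auto
  also have "\<dots> \<le> a powr r - b powr r"
    using powr_add_le_powr_sum[OF r, of "a - b" b] same_sign by simp
  finally show ?case using same_sign by (simp add: mazur_nonneg)
next
  case (opposite_sign a b)
  have "2 powr (1 - r) * (a - b) powr r = 2 * ((a + - b) / 2) powr r"
    using opposite_sign by (simp add: powr_divide powr_diff)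
  also have "\<dots> \<le> a powr r + (- b) powr r"
    using midpoint_powr_le_of_ge_one[OF r, of a "- b"] opposite_sign by simp
  also have "\<dots> = mazur r a - mazur r b"
    using opposite_sign mazur_minus[of r b] by (simp add: mazur_nonneg)
  finally show ?case using opposite_sign by simp
qed (simp_all add: abs_minus_commute mazur_minus)

lemma abs_mazur_diff_le:
  assumes r: "1 \<le> r"
  shows "\<bar>mazur r a - mazur r b\<bar>
    \<le> r * \<bar>a - b\<bar> * ((\<bar>a\<bar> powr r + \<bar>b\<bar> powr r) / 2) powr ((r - 1) / r)"
proof (induction a b rule: real_pair_sign_cases)
  case (same_sign a b)
  then have "0 \<le> a powr r - b powr r" using r by (simp add: powr_mono2)
  then show ?case
    using powr_diff_le_power_mean[OF r same_sign] same_sign by (simp add: mazur_nonneg)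
next
  case (opposite_sign a b)
  have "mazur r a - mazur r b = a powr r + (- b) powr r"
    using opposite_sign mazur_minus[of r b] by (simp add: mazur_nonneg)
  then show ?case
    using powr_add_le_power_mean[OF r, of a "- b"] opposite_sign by simp
qed (simp_all add: abs_minus_commute mazur_minus add.commute)

lemma mazur_comp_in_lp_space:
  assumes "x \<in> lp_space (r * q)"
  shows "mazur r \<circ> x \<in> lp_space q"
  using assms by (simp add: lp_space_iff abs_mazur powr_powr)

lemma lp_dist_mazur_ge:
  assumes r: "1 \<le> r" and q: "0 < q" and x: "x \<in> lp_space (r * q)" and y: "y \<in> lp_space (r * q)"
  shows "2 powr (1 - r) * lp_dist (r * q) x y powr r \<le> lp_dist q (mazur r \<circ> x) (mazur r \<circ> y)"
proof -
  define p where "p = r * q"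
  define E where "E = (\<lambda>i. \<bar>x i - y i\<bar> powr p)"
  define D where "D = (\<lambda>i. \<bar>mazur r (x i) - mazur r (y i)\<bar> powr q)"
  have "p > 0" using r q by (simp add: p_def)
  have sE: "summable E"
    using lp_space_diff[OF \<open>p > 0\<close>] x y by (simp add: E_def p_def lp_space_iff)
  have sD: "summable D"
    using lp_space_diff[OF q mazur_comp_in_lp_space[OF x] mazur_comp_in_lp_space[OF y]]
    by (simp add: D_def lp_space_iff)
  have "(2 powr (1 - r)) powr q * E i \<le> D i" for i
  proof -
    have "(2 powr (1 - r) * \<bar>x i - y i\<bar> powr r) powr q \<le> D i"
      unfolding D_def using abs_mazur_diff_ge[OF r] q by (intro powr_mono2) auto
    then show ?thesis by (simp add: E_def p_def powr_mult powr_powr)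
  qed
  then have "(2 powr (1 - r)) powr q * (\<Sum>i. E i) \<le> (\<Sum>i. D i)"
    using sE sD by (simp add: suminf_mult[symmetric] suminf_le summable_mult)
  then have "((2 powr (1 - r)) powr q * (\<Sum>i. E i)) powr (1 / q) \<le> (\<Sum>i. D i) powr (1 / q)"
    using sE q by (intro powr_mono2) (auto simp: E_def suminf_nonneg)
  moreover have "lp_dist p x y powr r = (\<Sum>i. E i) powr (1 / q)"
    using q r by (simp add: lp_dist_def E_def powr_powr p_def)
  ultimately show ?thesis
    using sE q by (simp add: lp_dist_def D_def powr_mult powr_powr E_def suminf_nonneg p_def)
qed

lemma power_mean_suminf_le:
  assumes r: "0 < r" and q: "1 \<le> q" and x: "x \<in> lp_space (r * q)" and y: "y \<in> lp_space (r * q)"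
  shows "summable (\<lambda>i. ((\<bar>x i\<bar> powr r + \<bar>y i\<bar> powr r) / 2) powr q)"
    and "(\<Sum>i. ((\<bar>x i\<bar> powr r + \<bar>y i\<bar> powr r) / 2) powr q)
      \<le> (lp_norm (r * q) x powr (r * q) + lp_norm (r * q) y powr (r * q)) / 2"
proof -
  define p where "p = r * q"
  have p: "0 < p" using r q by (simp add: p_def)
  have le: "((\<bar>x i\<bar> powr r + \<bar>y i\<bar> powr r) / 2) powr q \<le> (\<bar>x i\<bar> powr p + \<bar>y i\<bar> powr p) / 2" for i
    using midpoint_powr_le_of_ge_one[OF q, of "\<bar>x i\<bar> powr r" "\<bar>y i\<bar> powr r"] by (simp add: p_def powr_powr)
  have sx: "summable (\<lambda>i. \<bar>x i\<bar> powr p)" and sy: "summable (\<lambda>i. \<bar>y i\<bar> powr p)"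
    using x y by (simp_all add: p_def lp_space_iff)
  have sxy: "summable (\<lambda>i. (\<bar>x i\<bar> powr p + \<bar>y i\<bar> powr p) / 2)"
    using sx sy by (intro summable_divide summable_add)
  show summable: "summable (\<lambda>i. ((\<bar>x i\<bar> powr r + \<bar>y i\<bar> powr r) / 2) powr q)"
    by (rule summable_comparison_test[OF _ sxy]) (use le in auto)
  have "(\<Sum>i. ((\<bar>x i\<bar> powr r + \<bar>y i\<bar> powr r) / 2) powr q) \<le> (\<Sum>i. (\<bar>x i\<bar> powr p + \<bar>y i\<bar> powr p) / 2)"
    using le summable sxy by (rule suminf_le)
  also have "\<dots> = (\<Sum>i. \<bar>x i\<bar> powr p + \<bar>y i\<bar> powr p) / 2"
    by (rule suminf_divide[OF summable_add[OF sx sy]])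
  also have "\<dots> = (lp_norm p x powr p + lp_norm p y powr p) / 2"
    using suminf_add[OF sx sy] lp_norm_powr[OF p] x y by (simp add: p_def)
  finally show "(\<Sum>i. ((\<bar>x i\<bar> powr r + \<bar>y i\<bar> powr r) / 2) powr q)
      \<le> (lp_norm (r * q) x powr (r * q) + lp_norm (r * q) y powr (r * q)) / 2"
    by (simp add: p_def)
qed

lemma mazur_diff_suminf_le:
  assumes r: "1 < r" and q: "1 \<le> q" and x: "x \<in> lp_space (r * q)" and y: "y \<in> lp_space (r * q)"
  shows "(\<Sum>i. \<bar>mazur r (x i) - mazur r (y i)\<bar> powr q)
    \<le> r powr q * lp_dist (r * q) x y powr q
      * (\<Sum>i. ((\<bar>x i\<bar> powr r + \<bar>y i\<bar> powr r) / 2) powr q) powr ((r - 1) / r)"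
proof -
  define p where "p = r * q"
  define t where "t = r / (r - 1)"
  define E where "E = (\<lambda>i. \<bar>x i - y i\<bar> powr q)"
  define G where "G = (\<lambda>i. ((\<bar>x i\<bar> powr r + \<bar>y i\<bar> powr r) / 2) powr ((r - 1) / r * q))"
  define D where "D = (\<lambda>i. \<bar>mazur r (x i) - mazur r (y i)\<bar> powr q)"
  have p: "p > 0" using r q by (simp add: p_def)
  have st: "r > 1" "t > 1" "1 / r + 1 / t = 1" using r by (auto simp: t_def field_simps)
  have E_r: "E i powr r = \<bar>x i - y i\<bar> powr p" for i
    by (simp add: E_def p_def powr_powr mult.commute)
  have G_t: "G i powr t = ((\<bar>x i\<bar> powr r + \<bar>y i\<bar> powr r) / 2) powr q" for i
    using r by (simp add: G_def t_def powr_powr)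
  have sE: "summable (\<lambda>i. E i powr r)"
    using lp_space_diff[OF p, of x y] x y by (simp add: E_r p_def lp_space_iff)
  have sG: "summable (\<lambda>i. G i powr t)"
    using power_mean_suminf_le(1)[of r q x y] r q x y by (simp add: G_t)
  have sD: "summable D"
    using lp_space_diff[OF _ mazur_comp_in_lp_space[OF x] mazur_comp_in_lp_space[OF y]] q
    by (simp add: D_def lp_space_iff)
  have "0 \<le> E i" "0 \<le> G i" for i by (simp_all add: E_def G_def)
  note Holder = Holder_inequality_suminf[OF st this sE sG]
  have "D i \<le> r powr q * (E i * G i)" for i
  proof -
    have "D i \<le> (r * \<bar>x i - y i\<bar> * ((\<bar>x i\<bar> powr r + \<bar>y i\<bar> powr r) / 2) powr ((r - 1) / r)) powr q"
      unfolding D_def using abs_mazur_diff_le[of r] r q by (intro powr_mono2) auto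
    then show ?thesis using r by (simp add: E_def G_def powr_mult powr_powr)
  qed
  then have "(\<Sum>i. D i) \<le> r powr q * (\<Sum>i. E i * G i)"
    using sD Holder(1) by (simp add: suminf_mult[symmetric] suminf_le summable_mult)
  also have "\<dots> \<le> r powr q * ((\<Sum>i. E i powr r) powr (1 / r) * (\<Sum>i. G i powr t) powr (1 / t))"
    using Holder(2) by (intro mult_left_mono) auto
  also have "(\<Sum>i. E i powr r) = lp_dist p x y powr p"
    using lp_norm_powr[OF p lp_space_diff[OF p, of x y]] x y
    by (simp add: E_r lp_dist_eq_lp_norm p_def)
  also have "(lp_dist p x y powr p) powr (1 / r) = lp_dist p x y powr q"
    using r by (simp add: p_def powr_powr)
  also have "1 / t = (r - 1) / r" by (simp add: t_def)
  finally show ?thesis by (simp add: D_def G_t p_def mult.assoc)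
qed

lemma lp_dist_mazur_le:
  assumes r: "1 < r" and q: "1 \<le> q" and x: "x \<in> lp_space (r * q)" and y: "y \<in> lp_space (r * q)"
    and R: "lp_norm (r * q) x \<le> R" "lp_norm (r * q) y \<le> R"
  shows "lp_dist q (mazur r \<circ> x) (mazur r \<circ> y) \<le> r * R powr (r - 1) * lp_dist (r * q) x y"
proof -
  define S where "S = (\<Sum>i. ((\<bar>x i\<bar> powr r + \<bar>y i\<bar> powr r) / 2) powr q)"
  have "0 < r * q" using r q by simp
  have "0 \<le> R" using lp_norm_nonneg[of "r * q" x] R(1) by linarith
  have summable_mazur: "summable (\<lambda>i. \<bar>mazur r (x i) - mazur r (y i)\<bar> powr q)"
    using lp_space_diff[OF _ mazur_comp_in_lp_space[OF x] mazur_comp_in_lp_space[OF y]] q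
    by (simp add: lp_space_iff)
  have "S \<le> (lp_norm (r * q) x powr (r * q) + lp_norm (r * q) y powr (r * q)) / 2"
    using power_mean_suminf_le(2)[of r q x y] r q x y by (simp add: S_def)
  also have "\<dots> \<le> (R powr (r * q) + R powr (r * q)) / 2"
    using R \<open>0 < r * q\<close> by (intro divide_right_mono add_mono powr_mono2) simp_all
  finally have "S powr ((r - 1) / r) \<le> (R powr (r * q)) powr ((r - 1) / r)"
    using power_mean_suminf_le(1)[of r q x y] r q x y
    by (intro powr_mono2) (auto simp: S_def suminf_nonneg)
  then have "(\<Sum>i. \<bar>mazur r (x i) - mazur r (y i)\<bar> powr q)
      \<le> r powr q * lp_dist (r * q) x y powr q * (R powr (r * q)) powr ((r - 1) / r)"
    using order_trans[OF mazur_diff_suminf_le[OF r q x y]] by (simp add: S_def mult_left_mono)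
  also have "\<dots> = (r * R powr (r - 1) * lp_dist (r * q) x y) powr q"
    using r \<open>0 \<le> R\<close> by (simp add: powr_powr powr_mult mult_ac)
  finally have "(\<Sum>i. \<bar>mazur r (x i) - mazur r (y i)\<bar> powr q) powr (1 / q)
      \<le> ((r * R powr (r - 1) * lp_dist (r * q) x y) powr q) powr (1 / q)"
    using q summable_mazur by (intro powr_mono2) (auto intro: suminf_nonneg)
  then show ?thesis using r q \<open>0 \<le> R\<close> by (simp add: lp_dist_def powr_powr)
qed

section \<open>Operations on Lipschitz decompositions\<close>

definition separating :: "'a \<Rightarrow> 'a \<Rightarrow> 'a set set set" where
  "separating x y = {P. \<not> (\<exists>C\<in>P. x \<in> C \<and> y \<in> C)}"

lemma lipschitz_decompI:
  assumes "\<And>P. P \<in> set_pmf D \<Longrightarrow> partition_on M P"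
    and "\<And>P C x y. P \<in> set_pmf D \<Longrightarrow> C \<in> P \<Longrightarrow> x \<in> C \<Longrightarrow> y \<in> C \<Longrightarrow> d x y \<le> \<Delta>"
    and "\<And>x y. x \<in> M \<Longrightarrow> y \<in> M \<Longrightarrow> measure_pmf.prob D (separating x y) \<le> \<beta> * d x y / \<Delta>"
  shows "lipschitz_decomp d M \<beta> \<Delta> D"
  using assms by (auto simp: lipschitz_decomp_def separating_def)

lemma
  assumes "lipschitz_decomp d M \<beta> \<Delta> D"
  shows lipschitz_decomp_partition: "P \<in> set_pmf D \<Longrightarrow> partition_on M P"
    and lipschitz_decomp_diameter:
      "P \<in> set_pmf D \<Longrightarrow> C \<in> P \<Longrightarrow> x \<in> C \<Longrightarrow> y \<in> C \<Longrightarrow> d x y \<le> \<Delta>"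
    and lipschitz_decomp_prob_separating:
      "x \<in> M \<Longrightarrow> y \<in> M \<Longrightarrow> measure_pmf.prob D (separating x y) \<le> \<beta> * d x y / \<Delta>"
  using assms by (auto simp: lipschitz_decomp_def separating_def)

lemma lipschitz_decomp_mono:
  assumes "lipschitz_decomp d M \<beta> \<Delta> D" "\<beta> \<le> \<beta>'" "0 < \<Delta>"
    and "\<And>x y. x \<in> M \<Longrightarrow> y \<in> M \<Longrightarrow> 0 \<le> d x y"
  shows "lipschitz_decomp d M \<beta>' \<Delta> D"
proof (rule lipschitz_decompI)
  fix x y assume xy: "x \<in> M" "y \<in> M"
  have "\<beta> * d x y / \<Delta> \<le> \<beta>' * d x y / \<Delta>"
    using assms(2,3) assms(4)[OF xy] by (intro divide_right_mono mult_right_mono) auto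
  then show "measure_pmf.prob D (separating x y) \<le> \<beta>' * d x y / \<Delta>"
    using lipschitz_decomp_prob_separating[OF assms(1) xy] by linarith
qed (use lipschitz_decomp_partition[OF assms(1)] lipschitz_decomp_diameter[OF assms(1)] in auto)

lemma lipschitz_decomp_subsingleton:
  assumes "\<And>x y. x \<in> M \<Longrightarrow> y \<in> M \<Longrightarrow> x = y" and "\<And>x. x \<in> M \<Longrightarrow> d x x = 0" and "0 \<le> \<Delta>"
  shows "lipschitz_decomp d M \<beta> \<Delta> (return_pmf ({M} - {{}}))"
proof (rule lipschitz_decompI)
  show "partition_on M P" if "P \<in> set_pmf (return_pmf ({M} - {{}}))" for P
    using that by (cases "M = {}") (auto simp: partition_on_empty partition_on_space)
  show "d x y \<le> \<Delta>" if "P \<in> set_pmf (return_pmf ({M} - {{}}))" "C \<in> P" "x \<in> C" "y \<in> C"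
    for P C x y
  proof -
    have "x \<in> M" "y \<in> M" using that by auto
    then show ?thesis using assms by metis
  qed
  fix x y assume "x \<in> M" "y \<in> M"
  then have "y = x" "d x y = 0" "{M} - {{}} = {M}" using assms(1,2) by auto
  with \<open>x \<in> M\<close> show "measure_pmf.prob (return_pmf ({M} - {{}})) (separating x y) \<le> \<beta> * d x y / \<Delta>"
    by (simp add: separating_def)
qed

lemma lipschitz_decomp_far_points:
  assumes D: "lipschitz_decomp d M \<beta> \<Delta> D" and ab: "a \<in> M" "b \<in> M"
    and "0 < \<Delta>" "\<Delta> < d a b"
  shows "\<Delta> \<le> \<beta> * d a b"
proof -
  have "set_pmf D \<subseteq> separating a b"
    using lipschitz_decomp_diameter[OF D] \<open>\<Delta> < d a b\<close> by (force simp: separating_def)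
  then have "measure_pmf.prob D (separating a b) = 1"
    by (subst measure_pmf.prob_eq_1) (auto simp: AE_measure_pmf_iff)
  with lipschitz_decomp_prob_separating[OF D ab] \<open>0 < \<Delta>\<close> show ?thesis by simp
qed

lemma lipschitz_decomp_beta_pos:
  assumes "\<And>\<Delta>. 0 < \<Delta> \<Longrightarrow> \<exists>D. lipschitz_decomp d M \<beta> \<Delta> D"
    and "a \<in> M" "b \<in> M" "0 < d a b"
  shows "0 < \<beta>"
proof -
  have "0 < d a b / 2" using assms(4) by simp
  then obtain D where "lipschitz_decomp d M \<beta> (d a b / 2) D" using assms(1) by blast
  from lipschitz_decomp_far_points[OF this assms(2,3)] assms(4) have "d a b / 2 \<le> \<beta> * d a b"
    by simp
  with assms(4) show ?thesis by (simp add: zero_less_mult_iff)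
qed

definition pullback_partition :: "'a set \<Rightarrow> ('a \<Rightarrow> 'b) \<Rightarrow> 'b set set \<Rightarrow> 'a set set" where
  "pullback_partition C f Q = (\<lambda>A. C \<inter> f -` A) ` Q - {{}}"

lemma partition_on_pullback:
  assumes "partition_on (f ` C) Q"
  shows "partition_on C (pullback_partition C f Q)"
proof -
  have "partition_on (C \<inter> f -` (f ` C)) ((\<inter>) C ` ((-`) f ` Q - {{}}) - {{}})"
    by (intro partition_on_restrict partition_on_vimage assms)
  moreover have "(\<inter>) C ` ((-`) f ` Q - {{}}) - {{}} = pullback_partition C f Q"
    by (auto simp: pullback_partition_def)
  moreover have "C \<inter> f -` (f ` C) = C" by auto
  ultimately show ?thesis by simp
qed

lemma separating_pullback:
  assumes "x \<in> C" "y \<in> C"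
  shows "pullback_partition C f Q \<in> separating x y \<longleftrightarrow> Q \<in> separating (f x) (f y)"
proof -
  have "(\<exists>B\<in>pullback_partition C f Q. x \<in> B \<and> y \<in> B) \<longleftrightarrow> (\<exists>A\<in>Q. f x \<in> A \<and> f y \<in> A)"
  proof
    assume "\<exists>B\<in>pullback_partition C f Q. x \<in> B \<and> y \<in> B"
    then obtain A where "A \<in> Q" "x \<in> C \<inter> f -` A" "y \<in> C \<inter> f -` A"
      by (auto simp: pullback_partition_def simp del: Int_iff)
    then show "\<exists>A\<in>Q. f x \<in> A \<and> f y \<in> A" by auto
  next
    assume "\<exists>A\<in>Q. f x \<in> A \<and> f y \<in> A"
    then obtain A where "A \<in> Q" "f x \<in> A" "f y \<in> A" by blast
    with assms show "\<exists>B\<in>pullback_partition C f Q. x \<in> B \<and> y \<in> B"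
      by (intro bexI[of _ "C \<inter> f -` A"]) (auto simp: pullback_partition_def)
  qed
  then show ?thesis unfolding separating_def mem_Collect_eq by (rule arg_cong)
qed

lemma lipschitz_decomp_pullback:
  assumes D: "lipschitz_decomp d' (f ` C) \<beta> \<Delta>' D" and "0 \<le> \<beta>" "0 < \<Delta>'" "0 < \<Delta>"
    and diameter: "\<And>x y. x \<in> C \<Longrightarrow> y \<in> C \<Longrightarrow> d' (f x) (f y) \<le> \<Delta>' \<Longrightarrow> d x y \<le> \<Delta>"
    and lipschitz: "\<And>x y. x \<in> C \<Longrightarrow> y \<in> C \<Longrightarrow> d' (f x) (f y) \<le> L * d x y"
  shows "lipschitz_decomp d C (\<beta> * L * \<Delta> / \<Delta>') \<Delta> (map_pmf (pullback_partition C f) D)"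
proof (rule lipschitz_decompI)
  fix P assume "P \<in> set_pmf (map_pmf (pullback_partition C f) D)"
  then obtain Q where Q: "Q \<in> set_pmf D" and P: "P = pullback_partition C f Q" by auto
  show "partition_on C P"
    unfolding P by (rule partition_on_pullback[OF lipschitz_decomp_partition[OF D Q]])
  show "d x y \<le> \<Delta>" if B: "B \<in> P" and xy: "x \<in> B" "y \<in> B" for B x y
  proof -
    obtain A where "A \<in> Q" "B = C \<inter> f -` A" using B by (auto simp: P pullback_partition_def)
    with xy show ?thesis
      by (intro diameter lipschitz_decomp_diameter[OF D Q \<open>A \<in> Q\<close>]) auto
  qed
next
  fix x y assume xy: "x \<in> C" "y \<in> C"
  have "pullback_partition C f -` separating x y = separating (f x) (f y)"
    using separating_pullback[OF xy] by blast
  then have "measure_pmf.prob (map_pmf (pullback_partition C f) D) (separating x y)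
      = measure_pmf.prob D (separating (f x) (f y))"
    by simp
  also have "\<dots> \<le> \<beta> * d' (f x) (f y) / \<Delta>'"
    using lipschitz_decomp_prob_separating[OF D] xy by simp
  also have "\<dots> \<le> \<beta> * (L * d x y) / \<Delta>'"
    using lipschitz[OF xy] assms(2,3) by (intro divide_right_mono mult_left_mono) auto
  also have "\<dots> = \<beta> * L * \<Delta> / \<Delta>' * d x y / \<Delta>"
    using assms(4) by simp
  finally show "measure_pmf.prob (map_pmf (pullback_partition C f) D) (separating x y)
      \<le> \<beta> * L * \<Delta> / \<Delta>' * d x y / \<Delta>" .
qed

lemma lipschitz_decomp_quotient:
  assumes E: "equiv T E" and close: "\<And>x y. (x, y) \<in> E \<Longrightarrow> d x y \<le> \<Delta>"
    and far: "\<And>x y. x \<in> T \<Longrightarrow> y \<in> T \<Longrightarrow> (x, y) \<notin> E \<Longrightarrow> \<Delta> \<le> \<beta> * d x y"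
    and "0 < \<Delta>" "0 \<le> \<beta>" and nonneg: "\<And>x y. x \<in> T \<Longrightarrow> y \<in> T \<Longrightarrow> 0 \<le> d x y"
  shows "lipschitz_decomp d T \<beta> \<Delta> (return_pmf (T // E))"
proof (rule lipschitz_decompI)
  show "partition_on T P" if "P \<in> set_pmf (return_pmf (T // E))" for P
    using that partition_on_quotient[OF E] by simp
  show "d x y \<le> \<Delta>" if P: "P \<in> set_pmf (return_pmf (T // E))" and C: "C \<in> P"
    and xy: "x \<in> C" "y \<in> C" for P C x y
  proof -
    obtain z where "C = E `` {z}" using P C by (auto simp: quotient_def)
    then have "(z, x) \<in> E" "(z, y) \<in> E" using xy by auto
    then show ?thesis using E close by (meson equivE symE transE)
  qed
next
  fix x y assume xy: "x \<in> T" "y \<in> T"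
  show "measure_pmf.prob (return_pmf (T // E)) (separating x y) \<le> \<beta> * d x y / \<Delta>"
  proof (cases "(x, y) \<in> E")
    case True
    have "E `` {x} \<in> T // E" using xy(1) by (rule quotientI)
    moreover have "x \<in> E `` {x}" "y \<in> E `` {x}"
      using E xy True by (auto simp: equiv_def refl_on_def)
    ultimately have "T // E \<notin> separating x y" unfolding separating_def by blast
    then show ?thesis using nonneg[OF xy] assms(4,5) by simp
  next
    case False
    then have "1 \<le> \<beta> * d x y / \<Delta>" using far[OF xy] assms(4) by simp
    then show ?thesis by (simp add: indicator_def)
  qed
qed

lemma partition_on_UN:
  assumes P: "partition_on M P" and g: "\<And>C. C \<in> P \<Longrightarrow> partition_on C (g C)"
  shows "partition_on M (\<Union>C\<in>P. g C)"
proof (rule partition_onI)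
  have "\<Union>(\<Union>C\<in>P. g C) = (\<Union>C\<in>P. \<Union>(g C))" by auto
  also have "\<dots> = \<Union>P" using partition_onD1[OF g] by simp
  finally show "\<Union>(\<Union>C\<in>P. g C) = M" using partition_onD1[OF P] by simp
  show "{} \<notin> (\<Union>C\<in>P. g C)" using partition_onD3[OF g] by auto
  fix p q assume "p \<in> (\<Union>C\<in>P. g C)" "q \<in> (\<Union>C\<in>P. g C)" "p \<noteq> q"
  then obtain C1 C2 where C: "C1 \<in> P" "p \<in> g C1" "C2 \<in> P" "q \<in> g C2" by auto
  have "p \<subseteq> C1" "q \<subseteq> C2" using C partition_onD1[OF g] by auto
  show "disjnt p q"
  proof (cases "C1 = C2")
    case True
    then show ?thesis
      using pairwiseD[OF partition_onD2[OF g[OF C(1)]]] C \<open>p \<noteq> q\<close> by simp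
  next
    case False
    then have "disjnt C1 C2" using pairwiseD[OF partition_onD2[OF P]] C by simp
    then show ?thesis using \<open>p \<subseteq> C1\<close> \<open>q \<subseteq> C2\<close> by (auto simp: disjnt_def)
  qed
qed

lemma measure_bind_pmf_le:
  assumes "\<And>x. x \<in> set_pmf D \<Longrightarrow> measure_pmf.prob (F x) S \<le> indicator S x + c" and "0 \<le> c"
  shows "measure_pmf.prob (bind_pmf D F) S \<le> measure_pmf.prob D S + c"
proof -
  have "ennreal (measure_pmf.prob (bind_pmf D F) S) = (\<integral>\<^sup>+x. emeasure (F x) S \<partial>D)"
    by (simp add: measure_pmf.emeasure_eq_measure[symmetric])
  also have "\<dots> \<le> (\<integral>\<^sup>+x. (indicator S x + ennreal c) \<partial>D)"
  proof (intro nn_integral_mono_AE)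
    have "emeasure (F x) S \<le> indicator S x + ennreal c" if "x \<in> set_pmf D" for x
    proof -
      have "ennreal (measure_pmf.prob (F x) S) \<le> ennreal (indicator S x + c)"
        by (rule ennreal_leI) (rule assms(1)[OF that])
      also have "\<dots> = indicator S x + ennreal c"
        using assms(2) by (simp add: ennreal_plus ennreal_indicator)
      finally show ?thesis by (simp add: measure_pmf.emeasure_eq_measure)
    qed
    then show "AE x in D. emeasure (F x) S \<le> indicator S x + ennreal c"
      by (simp add: AE_measure_pmf_iff)
  qed
  also have "\<dots> = emeasure D S + ennreal c"
    by (simp add: nn_integral_add measure_pmf.emeasure_space_1)
  also have "\<dots> = ennreal (measure_pmf.prob D S + c)"
    using assms(2) by (simp add: measure_pmf.emeasure_eq_measure ennreal_plus)
  finally have "ennreal (measure_pmf.prob (bind_pmf D F) S) \<le> ennreal (measure_pmf.prob D S + c)" .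
  then show ?thesis using assms(2) by (simp add: ennreal_le_iff del: ennreal_plus)
qed

definition refine_partitions :: "'a set set pmf \<Rightarrow> ('a set \<Rightarrow> 'a set set pmf) \<Rightarrow> 'a set set pmf" where
  "refine_partitions D DC = bind_pmf D (\<lambda>P. map_pmf (\<lambda>g. \<Union>C\<in>P. g C) (Pi_pmf P {} DC))"

lemma set_pmf_refine_partitions:
  assumes "PP \<in> set_pmf (refine_partitions D DC)" and "\<And>P. P \<in> set_pmf D \<Longrightarrow> finite P"
  shows "\<exists>P\<in>set_pmf D. \<exists>g. (\<forall>C\<in>P. g C \<in> set_pmf (DC C)) \<and> PP = (\<Union>C\<in>P. g C)"
proof -
  obtain P g where "P \<in> set_pmf D" "g \<in> set_pmf (Pi_pmf P {} DC)" "PP = (\<Union>C\<in>P. g C)"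
    using assms(1) by (auto simp: refine_partitions_def)
  moreover have "\<forall>C\<in>P. g C \<in> set_pmf (DC C)"
    using \<open>g \<in> _\<close> set_Pi_pmf[OF assms(2)[OF \<open>P \<in> _\<close>], of "{}" DC] by (auto simp: PiE_dflt_def)
  ultimately show ?thesis by blast
qed

lemma prob_separating_refine_le:
  assumes "finite P" and DC: "\<And>C. C \<in> P \<Longrightarrow> x \<in> C \<Longrightarrow> y \<in> C \<Longrightarrow> measure_pmf.prob (DC C) (separating x y) \<le> c"
    and "0 \<le> c"
  shows "measure_pmf.prob (map_pmf (\<lambda>g. \<Union>C\<in>P. g C) (Pi_pmf P dflt DC)) (separating x y)
    \<le> indicator (separating x y) P + c"
proof (cases "P \<in> separating x y")
  case True
  then show ?thesis using \<open>0 \<le> c\<close> measure_pmf.prob_le_1 by (simp add: add_increasing2)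
next
  case False
  then obtain C where C: "C \<in> P" "x \<in> C" "y \<in> C" by (auto simp: separating_def)
  have "(\<lambda>g. \<Union>C\<in>P. g C) -` separating x y \<subseteq> (\<lambda>g. g C) -` separating x y"
    using C(1) by (auto simp: separating_def)
  then have "measure_pmf.prob (map_pmf (\<lambda>g. \<Union>C\<in>P. g C) (Pi_pmf P dflt DC)) (separating x y)
      \<le> measure_pmf.prob (map_pmf (\<lambda>g. g C) (Pi_pmf P dflt DC)) (separating x y)"
    by (simp add: measure_pmf.finite_measure_mono)
  also have "map_pmf (\<lambda>g. g C) (Pi_pmf P dflt DC) = DC C"
    by (simp add: Pi_pmf_component[OF assms(1)] C(1))
  finally show ?thesis using DC[OF C] False by simp
qed

lemma lipschitz_decomp_refine:
  assumes M: "finite M" and D: "lipschitz_decomp d M \<beta>1 \<Delta>1 D"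
    and DC: "\<And>C. C \<in> \<Union>(set_pmf D) \<Longrightarrow> lipschitz_decomp d C \<beta>2 \<Delta> (DC C)"
    and "0 < \<Delta>1" "0 < \<Delta>" "0 \<le> \<beta>2" and nonneg: "\<And>x y. x \<in> M \<Longrightarrow> y \<in> M \<Longrightarrow> 0 \<le> d x y"
  shows "lipschitz_decomp d M (\<beta>1 * \<Delta> / \<Delta>1 + \<beta>2) \<Delta> (refine_partitions D DC)"
proof -
  have finite_P: "finite P" if "P \<in> set_pmf D" for P
    using finite_elements[OF M lipschitz_decomp_partition[OF D that]] .
  show ?thesis
  proof (rule lipschitz_decompI)
    fix PP assume "PP \<in> set_pmf (refine_partitions D DC)"
    then obtain P g where P: "P \<in> set_pmf D" and g: "\<And>C. C \<in> P \<Longrightarrow> g C \<in> set_pmf (DC C)"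
      and PP: "PP = (\<Union>C\<in>P. g C)"
      using set_pmf_refine_partitions finite_P by metis
    have DC_P: "lipschitz_decomp d C \<beta>2 \<Delta> (DC C)" if "C \<in> P" for C
      using DC P that by auto
    show "partition_on M PP"
      unfolding PP using lipschitz_decomp_partition[OF D P] lipschitz_decomp_partition[OF DC_P g]
      by (rule partition_on_UN)
    show "d x y \<le> \<Delta>" if "B \<in> PP" "x \<in> B" "y \<in> B" for B x y
      using that lipschitz_decomp_diameter[OF DC_P g] by (auto simp: PP)
  next
    fix x y assume xy: "x \<in> M" "y \<in> M"
    have DC_sep: "measure_pmf.prob (DC C) (separating x y) \<le> \<beta>2 * d x y / \<Delta>"
      if "P \<in> set_pmf D" "C \<in> P" "x \<in> C" "y \<in> C" for P C
      using lipschitz_decomp_prob_separating[OF DC] that by blast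
    have "measure_pmf.prob (refine_partitions D DC) (separating x y)
        \<le> measure_pmf.prob D (separating x y) + \<beta>2 * d x y / \<Delta>"
      unfolding refine_partitions_def using nonneg[OF xy] assms(5,6) finite_P
      by (intro measure_bind_pmf_le prob_separating_refine_le) (auto intro: DC_sep)
    also have "\<dots> \<le> \<beta>1 * d x y / \<Delta>1 + \<beta>2 * d x y / \<Delta>"
      using lipschitz_decomp_prob_separating[OF D xy] by simp
    also have "\<dots> = (\<beta>1 * \<Delta> / \<Delta>1 + \<beta>2) * d x y / \<Delta>"
      using assms(5) by (simp add: field_simps)
    finally show "measure_pmf.prob (refine_partitions D DC) (separating x y)
        \<le> (\<beta>1 * \<Delta> / \<Delta>1 + \<beta>2) * d x y / \<Delta>" .
  qed
qed

lemma lipschitz_decomp_two_scales: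
  assumes M: "finite M" and D: "lipschitz_decomp d M \<beta>1 \<Delta>1 D"
    and "0 < \<Delta>1" "0 < \<Delta>" "0 \<le> \<beta>2" and nonneg: "\<And>x y. x \<in> M \<Longrightarrow> y \<in> M \<Longrightarrow> 0 \<le> d x y"
    and clusters: "\<And>C. C \<subseteq> M \<Longrightarrow> (\<And>x y. x \<in> C \<Longrightarrow> y \<in> C \<Longrightarrow> d x y \<le> \<Delta>1)
      \<Longrightarrow> \<exists>D. lipschitz_decomp d C \<beta>2 \<Delta> D"
  shows "\<exists>D. lipschitz_decomp d M (\<beta>1 * \<Delta> / \<Delta>1 + \<beta>2) \<Delta> D"
proof -
  have "\<exists>D. lipschitz_decomp d C \<beta>2 \<Delta> D" if C: "C \<in> \<Union>(set_pmf D)" for C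
  proof -
    obtain P where P: "P \<in> set_pmf D" "C \<in> P" using C by blast
    then have "C \<subseteq> M" using lipschitz_decomp_partition[OF D] partition_onD1 by blast
    then show ?thesis using clusters lipschitz_decomp_diameter[OF D P] by blast
  qed
  then obtain DC where "\<And>C. C \<in> \<Union>(set_pmf D) \<Longrightarrow> lipschitz_decomp d C \<beta>2 \<Delta> (DC C)"
    by metis
  from lipschitz_decomp_refine[OF M D this assms(3-5) nonneg] show ?thesis by blast
qed

definition decomposable_betas :: "('a \<Rightarrow> 'a \<Rightarrow> real) \<Rightarrow> 'a set \<Rightarrow> real set" where
  "decomposable_betas d S = {\<beta>. \<beta> \<ge> 1 \<and> (\<forall>\<Delta>>0. \<forall>M'. M' \<subseteq> S \<and> finite M' \<longrightarrow>
      (\<exists>D. lipschitz_decomp d M' \<beta> \<Delta> D))}"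

lemma beta_star_eq_Inf: "beta_star d S = Inf (decomposable_betas d S)"
  by (simp add: beta_star_def decomposable_betas_def)

context Metric_space
begin

lemma dist_le_of_relpow_close:
  assumes "T \<subseteq> M" and "(x, y) \<in> {(x, y). x \<in> T \<and> y \<in> T \<and> d x y < \<delta>} ^^ k" and "x \<in> T"
  shows "y \<in> T \<and> d x y \<le> real k * \<delta>"
  using assms(2)
proof (induction k arbitrary: y)
  case 0
  then show ?case using assms(1,3) by auto
next
  case (Suc k)
  from Suc.prems obtain z where
    z: "(x, z) \<in> {(x, y). x \<in> T \<and> y \<in> T \<and> d x y < \<delta>} ^^ k"
    and zy: "(z, y) \<in> {(x, y). x \<in> T \<and> y \<in> T \<and> d x y < \<delta>}"
    by (rule relpow_Suc_E)
  from Suc.IH[OF z] zy have "z \<in> T" "d x z \<le> real k * \<delta>" "y \<in> T" "d z y < \<delta>"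
    by simp_all
  moreover have "d x y \<le> d x z + d z y"
    using triangle assms(1,3) \<open>z \<in> T\<close> \<open>y \<in> T\<close> by blast
  ultimately show ?case by (simp add: algebra_simps)
qed

lemma dist_le_of_trancl_close:
  assumes T: "finite T" "T \<subseteq> M" and xy: "(x, y) \<in> {(x, y). x \<in> T \<and> y \<in> T \<and> d x y < \<delta>}\<^sup>+"
    and "0 \<le> \<delta>"
  shows "d x y \<le> real (card T) ^ 2 * \<delta>"
proof -
  define R where "R = {(x, y). x \<in> T \<and> y \<in> T \<and> d x y < \<delta>}"
  have "R \<subseteq> T \<times> T" by (auto simp: R_def)
  then have "finite R" "card R \<le> card T ^ 2"
    using T(1) card_mono[OF finite_SigmaI[OF T(1) T(1)]]
    by (auto simp: card_cartesian_product power2_eq_square intro: finite_subset)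
  have "(x, y) \<in> R\<^sup>+" using xy by (simp add: R_def)
  with \<open>finite R\<close> obtain k where "k \<le> card R" and k: "(x, y) \<in> R ^^ k"
    using trancl_finite_eq_relpow by auto
  with \<open>card R \<le> card T ^ 2\<close> have "real k \<le> real (card T) ^ 2"
    by (metis le_trans of_nat_le_iff of_nat_power)
  have "x \<in> T" using trancl_subset_Sigma[OF \<open>R \<subseteq> T \<times> T\<close>] \<open>(x, y) \<in> R\<^sup>+\<close> by auto
  then have "d x y \<le> real k * \<delta>"
    using dist_le_of_relpow_close[OF T(2) k[unfolded R_def]] by blast
  also have "\<dots> \<le> real (card T) ^ 2 * \<delta>"
    using \<open>real k \<le> _\<close> \<open>0 \<le> \<delta>\<close> by (rule mult_right_mono)
  finally show ?thesis .
qed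

text \<open>The clusters are the components of the graph joining points at distance below
  \<Delta> / (card T ^ 2 + 1): a component is spanned by paths of at most card T ^ 2 short edges,
  and points in different components are far apart.\<close>

lemma lipschitz_decomp_finite:
  assumes T: "finite T" "T \<subseteq> M" and "0 < \<Delta>"
  shows "\<exists>D. lipschitz_decomp d T (real (card T) ^ 2 + 1) \<Delta> D"
proof -
  define K where "K = real (card T) ^ 2 + 1"
  have K: "K > 0" unfolding K_def by (intro add_nonneg_pos) simp_all
  define \<delta> where "\<delta> = \<Delta> / K"
  have \<delta>: "\<delta> > 0" using K \<open>0 < \<Delta>\<close> by (simp add: \<delta>_def)
  define R where "R = {(x, y). x \<in> T \<and> y \<in> T \<and> d x y < \<delta>}"
  define E where "E = Id_on T \<union> R\<^sup>+"
  have RT: "R \<subseteq> T \<times> T" by (auto simp: R_def)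
  then have ET: "E \<subseteq> T \<times> T" using trancl_subset_Sigma[OF RT] by (auto simp: E_def)
  have "sym R" by (auto simp: R_def sym_def commute)
  have equiv: "equiv T E"
  proof (rule equivI)
    show "E \<subseteq> T \<times> T" by (rule ET)
    show "refl_on T E" using ET by (auto simp: refl_on_def E_def)
    show "sym E" using sym_trancl[OF \<open>sym R\<close>] by (auto simp: E_def sym_def)
    show "trans E" unfolding E_def trans_def by (auto intro: trancl_trans)
  qed
  have "d x y \<le> \<Delta>" if "(x, y) \<in> E" for x y
  proof (cases "x = y")
    case True
    then show ?thesis using that ET T(2) \<open>0 < \<Delta>\<close> by auto
  next
    case False
    with that have "d x y \<le> real (card T) ^ 2 * \<delta>"
      using dist_le_of_trancl_close[OF T] \<delta> by (auto simp: E_def R_def)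
    also have "\<dots> \<le> K * \<delta>" using \<delta> by (simp add: K_def)
    finally show ?thesis using K by (simp add: \<delta>_def)
  qed
  moreover have "\<Delta> \<le> K * d x y" if "x \<in> T" "y \<in> T" "(x, y) \<notin> E" for x y
    using that K by (auto simp: E_def R_def \<delta>_def field_simps)
  ultimately have "lipschitz_decomp d T K \<Delta> (return_pmf (T // E))"
    using K \<open>0 < \<Delta>\<close> by (intro lipschitz_decomp_quotient[OF equiv]) simp_all
  then show ?thesis unfolding K_def by blast
qed

lemma card_square_decomposable:
  assumes "finite S" "S \<subseteq> M"
  shows "real (card S) ^ 2 + 1 \<in> decomposable_betas d S"
  unfolding decomposable_betas_def
proof (intro CollectI conjI allI impI)
  fix \<Delta> :: real and M' assume "0 < \<Delta>" "M' \<subseteq> S \<and> finite M'"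
  then obtain D where D: "lipschitz_decomp d M' (real (card M') ^ 2 + 1) \<Delta> D"
    using lipschitz_decomp_finite[of M' \<Delta>] assms by blast
  have "card M' \<le> card S" using \<open>M' \<subseteq> S \<and> finite M'\<close> assms(1) by (simp add: card_mono)
  then have le: "real (card M') ^ 2 + 1 \<le> real (card S) ^ 2 + 1" by (simp add: power_mono)
  show "\<exists>D. lipschitz_decomp d M' (real (card S) ^ 2 + 1) \<Delta> D"
    by (intro exI[of _ D] lipschitz_decomp_mono[OF D le \<open>0 < \<Delta>\<close>]) simp
qed simp

lemma beta_star_bounds:
  assumes "finite S" "S \<subseteq> M"
  shows "1 \<le> beta_star d S" "beta_star d S \<le> real (card S) ^ 2 + 1"
proof -
  have bdd: "bdd_below (decomposable_betas d S)"
    by (rule bdd_belowI[of _ 1]) (simp add: decomposable_betas_def)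
  have mem: "real (card S) ^ 2 + 1 \<in> decomposable_betas d S"
    by (rule card_square_decomposable[OF assms])
  show "beta_star d S \<le> real (card S) ^ 2 + 1"
    unfolding beta_star_eq_Inf by (rule cInf_lower[OF mem bdd])
  have "decomposable_betas d S \<noteq> {}" using mem by blast
  then show "1 \<le> beta_star d S"
    unfolding beta_star_eq_Inf by (rule cInf_greatest) (simp add: decomposable_betas_def)
qed

text \<open>The bound card S ^ 2 + 1 keeps the set whose supremum defines beta_star_n bounded,
  so that this supremum is a genuine one.\<close>

lemma beta_star_le_beta_star_n:
  assumes "finite S" "S \<subseteq> M" "card S \<le> n"
  shows "beta_star d S \<le> beta_star_n n d M"
proof -
  have "bdd_above {beta_star d M' | M'. M' \<subseteq> M \<and> finite M' \<and> card M' \<le> n}"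
  proof (rule bdd_aboveI)
    fix \<beta> assume "\<beta> \<in> {beta_star d M' | M'. M' \<subseteq> M \<and> finite M' \<and> card M' \<le> n}"
    then obtain M' where M': "\<beta> = beta_star d M'" "M' \<subseteq> M" "finite M'" "card M' \<le> n" by auto
    have "\<beta> \<le> real (card M') ^ 2 + 1" using beta_star_bounds(2)[OF M'(3,2)] M'(1) by simp
    also have "\<dots> \<le> real n ^ 2 + 1" using M'(4) by (simp add: power_mono)
    finally show "\<beta> \<le> real n ^ 2 + 1" .
  qed
  then show ?thesis
    unfolding beta_star_n_def using assms by (intro cSup_upper) auto
qed

lemma beta_star_n_ge_one: "1 \<le> beta_star_n n d M"
  using order_trans[OF beta_star_bounds(1)[of "{}"] beta_star_le_beta_star_n[of "{}" n]] by simp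

lemma lipschitz_decomp_gt_beta_star_n:
  assumes S: "finite S" "S \<subseteq> M" "card S \<le> n" and "beta_star_n n d M < \<beta>" "0 < \<Delta>"
  shows "\<exists>D. lipschitz_decomp d S \<beta> \<Delta> D"
proof -
  have "Inf (decomposable_betas d S) < \<beta>"
    using beta_star_le_beta_star_n[OF S] assms(4) unfolding beta_star_eq_Inf by linarith
  then obtain \<beta>' where "\<beta>' \<in> decomposable_betas d S" "\<beta>' < \<beta>"
    using cInf_lessD[of "decomposable_betas d S" \<beta>] card_square_decomposable[OF S(1,2)] by blast
  then have "\<forall>\<Delta>>0. \<forall>M'. M' \<subseteq> S \<and> finite M' \<longrightarrow> (\<exists>D. lipschitz_decomp d M' \<beta>' \<Delta> D)"
    by (simp add: decomposable_betas_def)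
  then obtain D where "lipschitz_decomp d S \<beta>' \<Delta> D" using S(1) \<open>0 < \<Delta>\<close> by blast
  from lipschitz_decomp_mono[OF this less_imp_le[OF \<open>\<beta>' < \<beta>\<close>] \<open>0 < \<Delta>\<close>] show ?thesis
    by auto
qed

end

lemma lp_dist_le_of_mazur_le:
  assumes r: "1 \<le> r" and q: "0 < q" and x: "x \<in> lp_space (r * q)" and y: "y \<in> lp_space (r * q)"
    and le: "lp_dist q (mazur r \<circ> x) (mazur r \<circ> y) \<le> 2 powr (1 - r) * \<Delta> powr r" and "0 \<le> \<Delta>"
  shows "lp_dist (r * q) x y \<le> \<Delta>"
proof -
  have "lp_dist (r * q) x y powr r \<le> \<Delta> powr r"
    using order_trans[OF lp_dist_mazur_ge[OF r q x y] le] by simp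
  show ?thesis
  proof (rule ccontr)
    assume "\<not> lp_dist (r * q) x y \<le> \<Delta>"
    then have "\<Delta> powr r < lp_dist (r * q) x y powr r"
      using r \<open>0 \<le> \<Delta>\<close> by (intro powr_less_mono2) auto
    with \<open>lp_dist (r * q) x y powr r \<le> \<Delta> powr r\<close> show False by simp
  qed
qed

lemma lp_norm_diff_centroid_le:
  assumes "1 < p" "finite C" "C \<subseteq> lp_space p" "card C \<le> n" "x \<in> C"
    and "\<And>y. y \<in> C \<Longrightarrow> lp_dist p x y \<le> \<Delta>"
  shows "lp_norm p (x - centroid C) \<le> (1 - 1 / real n) * \<Delta>"
proof -
  have "0 < card C" using assms(2,5) by (auto simp: card_gt_0_iff)
  have "0 \<le> \<Delta>" using assms(6)[OF assms(5)] by simp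
  have "lp_norm p (x - centroid C) \<le> (1 - 1 / real (card C)) * \<Delta>"
    using lp_dist_centroid_le[OF assms(1,2,3,5,6)] by (simp add: lp_dist_eq_lp_norm)
  also have "\<dots> \<le> (1 - 1 / real n) * \<Delta>"
    using assms(4) \<open>0 < card C\<close> \<open>0 \<le> \<Delta>\<close>
    by (intro mult_right_mono) (auto intro!: divide_left_mono)
  finally show ?thesis .
qed

lemma lipschitz_decomp_via_mazur:
  assumes r: "1 < r" and q: "1 < q" and C: "C \<subseteq> lp_space (r * q)" "finite C" "card C \<le> n"
    and c: "c \<in> lp_space (r * q)" and R: "\<And>x. x \<in> C \<Longrightarrow> lp_norm (r * q) (x - c) \<le> R"
    and \<beta>: "beta_star_n n (lp_dist q) (lp_space q) < \<beta>" and "0 < \<Delta>"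
  shows "\<exists>D. lipschitz_decomp (lp_dist (r * q)) C
    (\<beta> * (r * R powr (r - 1)) * \<Delta> / (2 powr (1 - r) * \<Delta> powr r)) \<Delta> D"
proof -
  define f where "f x = mazur r \<circ> (x - c)" for x
  define \<Delta>' where "\<Delta>' = 2 powr (1 - r) * \<Delta> powr r"
  have "0 < \<Delta>'" using \<open>0 < \<Delta>\<close> by (simp add: \<Delta>'_def)
  have "1 \<le> beta_star_n n (lp_dist q) (lp_space q)"
    by (rule Metric_space.beta_star_n_ge_one[OF Metric_space_lp[OF q]])
  with \<beta> have "0 \<le> \<beta>" by simp
  have "0 < r * q" using r q by simp
  have centred: "x - c \<in> lp_space (r * q)" if "x \<in> C" for x
    using lp_space_diff[OF \<open>0 < r * q\<close>] C(1) c that by auto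
  have diff: "(x - c) - (y - c) = x - y" for x y :: "nat \<Rightarrow> real" by (simp add: fun_eq_iff)
  have "f ` C \<subseteq> lp_space q"
    using mazur_comp_in_lp_space centred by (auto simp: f_def)
  moreover have "card (f ` C) \<le> n" using card_image_le[OF C(2), of f] C(3) by linarith
  ultimately obtain E where E: "lipschitz_decomp (lp_dist q) (f ` C) \<beta> \<Delta>' E"
    using Metric_space.lipschitz_decomp_gt_beta_star_n[OF Metric_space_lp[OF q]]
      \<beta> \<open>0 < \<Delta>'\<close> C(2) by blast
  have "lp_dist (r * q) x y \<le> \<Delta>" if "x \<in> C" "y \<in> C" "lp_dist q (f x) (f y) \<le> \<Delta>'" for x y
    using lp_dist_le_of_mazur_le[of r q "x - c" "y - c" \<Delta>] centred that r q \<open>0 < \<Delta>\<close>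
    by (simp add: f_def \<Delta>'_def lp_dist_eq_lp_norm diff)
  moreover have "lp_dist q (f x) (f y) \<le> r * R powr (r - 1) * lp_dist (r * q) x y"
    if "x \<in> C" "y \<in> C" for x y
    using lp_dist_mazur_le[of r q "x - c" "y - c" R] centred that r q R
    by (simp add: f_def lp_dist_eq_lp_norm diff)
  ultimately show ?thesis
    using lipschitz_decomp_pullback[OF E \<open>0 \<le> \<beta>\<close> \<open>0 < \<Delta>'\<close> \<open>0 < \<Delta>\<close>] unfolding \<Delta>'_def by blast
qed

text \<open>Centring at the centroid, every point of a cluster of diameter \<Delta>1 lies within
  \<theta> \<Delta>1 of the centre, with \<theta> = 1 - 1/n < 1. The resulting gain \<theta>^(r - 1) in the Lipschitz
  constant of the Mazur map pays for having to use a parameter B / \<theta>^(r - 1) strictly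
  above the infimum B = beta_star_n.\<close>

lemma mazur_refinement:
  fixes C :: "(nat \<Rightarrow> real) set"
  assumes q: "1 < q" "q < p" and C: "C \<subseteq> lp_space p" "finite C" "card C \<le> n"
    and diam: "\<And>x y. x \<in> C \<Longrightarrow> y \<in> C \<Longrightarrow> lp_dist p x y \<le> \<Delta>1" and "0 < \<Delta>"
  shows "\<exists>D. lipschitz_decomp (lp_dist p) C
    (p / q * 2 powr (p / q - 1) * beta_star_n n (lp_dist q) (lp_space q) * (\<Delta>1 / \<Delta>) powr (p / q - 1))
    \<Delta> D"
proof (cases "\<exists>a\<in>C. \<exists>b\<in>C. a \<noteq> b")
  case False
  then show ?thesis
    using lipschitz_decomp_subsingleton[of C "lp_dist p" \<Delta>] \<open>0 < \<Delta>\<close> by auto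
next
  case True
  then obtain a b where ab: "a \<in> C" "b \<in> C" "a \<noteq> b" by blast
  then have "2 \<le> card C" using card_mono[OF C(2), of "{a, b}"] by simp
  with C(3) have n: "2 \<le> n" by simp
  have "0 \<le> \<Delta>1" using diam[OF ab(1) ab(1)] by simp
  define r where "r = p / q"
  have r: "1 < r" "p = r * q" using q by (simp_all add: r_def)
  define B where "B = beta_star_n n (lp_dist q) (lp_space q)"
  have B: "1 \<le> B"
    unfolding B_def by (rule Metric_space.beta_star_n_ge_one[OF Metric_space_lp[OF q(1)]])
  define \<theta> where "\<theta> = 1 - 1 / real n"
  have \<theta>: "0 < \<theta>" "\<theta> < 1" using n by (auto simp: \<theta>_def)
  have "\<theta> powr (r - 1) < 1 powr (r - 1)" using \<theta> r by (intro powr_less_mono2) auto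
  then have "B < B / \<theta> powr (r - 1)" using B \<theta> by (simp add: field_simps)
  moreover have "lp_norm p (x - centroid C) \<le> \<theta> * \<Delta>1" if "x \<in> C" for x
    unfolding \<theta>_def using lp_norm_diff_centroid_le[OF _ C(2,1,3) that diam[OF that]] q by simp
  moreover have "centroid C \<in> lp_space p" using centroid_in_lp_space[OF _ C(2,1)] q by simp
  ultimately obtain D where "lipschitz_decomp (lp_dist p) C
      (B / \<theta> powr (r - 1) * (r * (\<theta> * \<Delta>1) powr (r - 1)) * \<Delta> / (2 powr (1 - r) * \<Delta> powr r)) \<Delta> D"
    using lipschitz_decomp_via_mazur[OF r(1) q(1), of C n "centroid C" "\<theta> * \<Delta>1"] C \<open>0 < \<Delta>\<close>
    unfolding r(2)[symmetric] B_def by blast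
  moreover have "B / \<theta> powr (r - 1) * (r * (\<theta> * \<Delta>1) powr (r - 1)) * \<Delta> / (2 powr (1 - r) * \<Delta> powr r)
      = r * 2 powr (r - 1) * B * (\<Delta>1 / \<Delta>) powr (r - 1)"
  proof -
    have "\<Delta> powr r = \<Delta> * \<Delta> powr (r - 1)" using powr_mult_self[of \<Delta> r] \<open>0 < \<Delta>\<close> by simp
    moreover have "2 powr (1 - r) * 2 powr (r - 1) = 1" by (simp add: powr_add[symmetric])
    ultimately show ?thesis
      using \<theta> \<open>0 \<le> \<Delta>1\<close> \<open>0 < \<Delta>\<close> by (simp add: powr_mult powr_divide field_simps)
  qed
  ultimately show ?thesis unfolding r_def B_def by auto
qed

lemma lipschitz_decomp_lp_two_scales:
  assumes q: "1 < q" "q < p" and M: "M \<subseteq> lp_space p" "finite M" "card M \<le> n"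
    and D1: "lipschitz_decomp (lp_dist p) M \<beta> (t * \<Delta>) D1" and "0 < t" "0 < \<Delta>"
  shows "\<exists>D. lipschitz_decomp (lp_dist p) M
    (\<beta> / t + p / q * 2 powr (p / q - 1) * beta_star_n n (lp_dist q) (lp_space q) * t powr (p / q - 1)) \<Delta> D"
proof -
  define K where "K = p / q * 2 powr (p / q - 1) * beta_star_n n (lp_dist q) (lp_space q)"
  have "1 \<le> beta_star_n n (lp_dist q) (lp_space q)"
    by (rule Metric_space.beta_star_n_ge_one[OF Metric_space_lp[OF q(1)]])
  then have "0 \<le> K * t powr (p / q - 1)" using q by (simp add: K_def)
  moreover have "\<exists>D. lipschitz_decomp (lp_dist p) C (K * t powr (p / q - 1)) \<Delta> D"
    if C: "C \<subseteq> M" and diam: "\<And>x y. x \<in> C \<Longrightarrow> y \<in> C \<Longrightarrow> lp_dist p x y \<le> t * \<Delta>" for C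
  proof -
    have "C \<subseteq> lp_space p" using C M(1) by blast
    moreover have "finite C" using C M(2) by (rule finite_subset)
    moreover have "card C \<le> n" using card_mono[OF M(2) C] M(3) by linarith
    ultimately show ?thesis
      using mazur_refinement[OF q _ _ _ diam \<open>0 < \<Delta>\<close>] \<open>0 < \<Delta>\<close> by (simp add: K_def)
  qed
  ultimately have "\<exists>D. lipschitz_decomp (lp_dist p) M (\<beta> * \<Delta> / (t * \<Delta>) + K * t powr (p / q - 1)) \<Delta> D"
    using \<open>0 < t\<close> \<open>0 < \<Delta>\<close> by (intro lipschitz_decomp_two_scales[OF M(2) D1]) simp_all
  then show ?thesis using \<open>0 < \<Delta>\<close> by (simp add: K_def)
qed

lemma balanced_sum_powr:
  fixes \<beta> K r :: real
  assumes "0 < \<beta>" "0 < K" "0 < r"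
  shows "\<beta> / (\<beta> / K) powr (1 / r) + K * ((\<beta> / K) powr (1 / r)) powr (r - 1)
    = 2 * K powr (1 / r) * \<beta> powr (1 - 1 / r)"
proof -
  define t where "t = (\<beta> / K) powr (1 / r)"
  have t: "0 < t" using assms by (simp add: t_def)
  have "K * t powr (r - 1) = K * t powr r / t" using t by (simp add: powr_diff)
  also have "t powr r = \<beta> / K" using assms by (simp add: t_def powr_powr)
  finally have "K * t powr (r - 1) = \<beta> / t" using assms by simp
  moreover have "\<beta> / t = K powr (1 / r) * \<beta> powr (1 - 1 / r)"
    using assms by (simp add: t_def powr_divide powr_diff)
  ultimately show ?thesis by (simp add: t_def)
qed

lemma balanced_refinement_parameter:
  fixes \<beta> B r :: real
  assumes "0 < \<beta>" "0 < B" "0 < r"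
  defines "K \<equiv> r * 2 powr (r - 1) * B"
  shows "\<beta> / (\<beta> / K) powr (1 / r) + K * ((\<beta> / K) powr (1 / r)) powr (r - 1)
    = 4 * (r / 2) powr (1 / r) * B powr (1 / r) * \<beta> powr (1 - 1 / r)"
proof -
  have "2 * 2 powr ((r - 1) / r) = 4 / 2 powr (1 / r)"
    using assms(3) by (simp add: powr_add[symmetric] powr_diff diff_divide_distrib)
  then have "2 * K powr (1 / r) = 4 * (r / 2) powr (1 / r) * B powr (1 / r)"
    using assms by (simp add: K_def powr_mult powr_powr powr_divide field_simps)
  have "0 < K" using assms by (simp add: K_def)
  have "\<beta> / (\<beta> / K) powr (1 / r) + K * ((\<beta> / K) powr (1 / r)) powr (r - 1)
      = 2 * K powr (1 / r) * \<beta> powr (1 - 1 / r)"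
    using balanced_sum_powr[OF assms(1) \<open>0 < K\<close> assms(3)] .
  also have "\<dots> = 4 * (r / 2) powr (1 / r) * B powr (1 / r) * \<beta> powr (1 - 1 / r)"
    using \<open>2 * K powr (1 / r) = _\<close> by simp
  finally show ?thesis .
qed

theorem lemma12:
  fixes p q \<beta> :: real and n :: nat and M :: "(nat \<Rightarrow> real) set"
  assumes "2 \<le> q" and "q < p"
    and "M \<subseteq> lp_space p" and "finite M" and "card M = n"
    and "\<forall>\<Delta>'>0. \<exists>D. lipschitz_decomp (lp_dist p) M \<beta> \<Delta>' D"
  shows "\<forall>\<Delta>>0. \<exists>D. lipschitz_decomp (lp_dist p) M
           (4 * (p / (2 * q)) powr (q / p) * (beta_star_n n (lp_dist q) (lp_space q)) powr (q / p)
              * \<beta> powr (1 - q / p)) \<Delta> D"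
proof -
  define r where "r = p / q"
  define B where "B = beta_star_n n (lp_dist q) (lp_space q)"
  have r: "0 < r" "q / p = 1 / r" "p / (2 * q) = r / 2" using assms(1,2) by (auto simp: r_def)
  have "1 \<le> B"
    unfolding B_def by (rule Metric_space.beta_star_n_ge_one[OF Metric_space_lp]) (use assms(1) in simp)
  then have "0 < B" by simp
  have "\<exists>D. lipschitz_decomp (lp_dist p) M (4 * (r / 2) powr (1 / r) * B powr (1 / r) * \<beta> powr (1 - 1 / r)) \<Delta> D"
    if "0 < \<Delta>" for \<Delta>
  proof (cases "\<exists>a\<in>M. \<exists>b\<in>M. a \<noteq> b")
    case False
    then show ?thesis using lipschitz_decomp_subsingleton[of M "lp_dist p" \<Delta>] \<open>0 < \<Delta>\<close> by auto
  next
    case True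
    then obtain a b where ab: "a \<in> M" "b \<in> M" "a \<noteq> b" by blast
    then have "0 < lp_dist p a b"
      using Metric_space.zero[OF Metric_space_lp, of p a b] assms(1-3) by (auto simp: order_less_le)
    then have "0 < \<beta>" using lipschitz_decomp_beta_pos[of "lp_dist p" M \<beta> a b] ab assms(6) by blast
    define t where "t = (\<beta> / (r * 2 powr (r - 1) * B)) powr (1 / r)"
    have "0 < t" using \<open>0 < \<beta>\<close> \<open>0 < B\<close> r by (simp add: t_def)
    then obtain D1 where "lipschitz_decomp (lp_dist p) M \<beta> (t * \<Delta>) D1"
      using assms(6) mult_pos_pos[OF \<open>0 < t\<close> \<open>0 < \<Delta>\<close>] by blast
    then have "\<exists>D. lipschitz_decomp (lp_dist p) M (\<beta> / t + r * 2 powr (r - 1) * B * t powr (r - 1)) \<Delta> D"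
      using lipschitz_decomp_lp_two_scales[OF _ assms(2-4)] assms(1,5) \<open>0 < t\<close> \<open>0 < \<Delta>\<close>
      unfolding r_def B_def by simp
    moreover have "\<beta> / t + r * 2 powr (r - 1) * B * t powr (r - 1)
        = 4 * (r / 2) powr (1 / r) * B powr (1 / r) * \<beta> powr (1 - 1 / r)"
      unfolding t_def by (rule balanced_refinement_parameter[OF \<open>0 < \<beta>\<close> \<open>0 < B\<close> \<open>0 < r\<close>])
    ultimately show ?thesis by simp
  qed
  then show ?thesis unfolding r(2,3) B_def[symmetric] by blast
qed

end
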